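(* Let $\alpha\in(0,1]$, $0\le a<b$, and let $f:[a,b]\to\mathbb{R}$ be $\alpha$-fractional differentiable such that $D_\alpha f$ is increasing and $f$ is decreasing on $[a,b]$. Then $$ f\left(\frac{a+b}{2}\right)\le\frac{\alpha}{b^\alpha-a^\alpha}\int_a^b f(s)\,d_\alpha s\le f(b)+f(a)-f\left(\frac{a+b}{2}\right). $$
   Context: The conformable $\alpha$-fractional derivative is $D_\alpha f(t):=\lim_{\varepsilon\to 0}\frac{f(t+\varepsilon t^{1-\alpha})-f(t)}{\varepsilon}$ for $t>0$, $D_\alpha f(0):=\lim_{t\to0^+}D_\alpha f(t)$. Integrals: $\int_a^b h(s)\,d_\alpha s:=\int_a^b h(s)s^{\alpha-1}\,ds$. *)

theory Defs
  imports "HOL-Analysis.Analysis"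
begin

definition conf_has_deriv_within ::
  "real \<Rightarrow> (real \<Rightarrow> real) \<Rightarrow> real \<Rightarrow> real \<Rightarrow> real set \<Rightarrow> bool" where
  "conf_has_deriv_within \<alpha> f L t S \<longleftrightarrow>
     ((\<lambda>\<epsilon>. (f (t + \<epsilon> * t powr (1 - \<alpha>)) - f t) / \<epsilon>) \<longlongrightarrow> L)
       (at 0 within {\<epsilon>. t + \<epsilon> * t powr (1 - \<alpha>) \<in> S})"

definition conf_deriv_on ::
  "real \<Rightarrow> (real \<Rightarrow> real) \<Rightarrow> (real \<Rightarrow> real) \<Rightarrow> real \<Rightarrow> real \<Rightarrow> bool" where
  "conf_deriv_on \<alpha> f Df a b \<longleftrightarrow>
     (\<forall>t\<in>{a..b}. 0 < t \<longrightarrow> conf_has_deriv_within \<alpha> f (Df t) t {a..b}) \<and>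
     (0 \<in> {a..b} \<longrightarrow> (Df \<longlongrightarrow> Df 0) (at_right 0))"

definition conf_integral :: "real \<Rightarrow> real \<Rightarrow> real \<Rightarrow> (real \<Rightarrow> real) \<Rightarrow> real" where
  "conf_integral \<alpha> a b h = integral {a..b} (\<lambda>s. h s * s powr (\<alpha> - 1))"

end

theory Submission
  imports Defs
begin

text \<open>
  In the variable u = s^\<alpha> the measure d_\<alpha>s becomes du/\<alpha>, and f becomes a function of u whose
  ordinary derivative is D_\<alpha>f/\<alpha>; so f is convex in u, in the form of the tangent-line inequality
  f s \<ge> f t + D_\<alpha>f t (s^\<alpha> - t^\<alpha>)/\<alpha>. The classical Hermite--Hadamard inequality in u gives
  f c \<le> \<alpha>/(b^\<alpha> - a^\<alpha>) \<integral> f d_\<alpha>s \<le> (f a + f b)/2, where c^\<alpha> is the midpoint of a^\<alpha> and b^\<alpha>.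
  Concavity of s^\<alpha> for \<alpha> \<le> 1 gives c \<le> (a + b)/2, hence f((a + b)/2) \<le> f c because f is
  decreasing, and, by the chord bound at (a + b)/2, also f((a + b)/2) \<le> (f a + f b)/2.
\<close>

lemma conf_has_deriv_within_imp_has_real_derivative:
  fixes f :: "real \<Rightarrow> real"
  assumes t: "0 < t" and conf: "conf_has_deriv_within \<alpha> f L t S"
  shows "(f has_real_derivative L * t powr (\<alpha> - 1)) (at t within S)"
proof -
  define c where "c = t powr (1 - \<alpha>)"
  have c: "0 < c" using t by (simp add: c_def)
  have "t powr (\<alpha> - 1) = 1 / c"
    unfolding c_def by (metis minus_diff_eq powr_minus_divide)
  have rescale: "filterlim (\<lambda>y. (y - t) / c) (at 0 within {\<epsilon>. t + \<epsilon> * c \<in> S}) (at t within S)"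
    unfolding filterlim_at
  proof
    show "\<forall>\<^sub>F y in at t within S. (y - t) / c \<in> {\<epsilon>. t + \<epsilon> * c \<in> S} \<and> (y - t) / c \<noteq> 0"
      using c by (auto simp: eventually_at_filter)
    show "((\<lambda>y. (y - t) / c) \<longlongrightarrow> 0) (at t within S)"
      using c by (auto intro!: tendsto_eq_intros)
  qed
  have "((\<lambda>y. (f (t + (y - t) / c * c) - f t) / ((y - t) / c) / c) \<longlongrightarrow> L / c) (at t within S)"
    using filterlim_compose[OF conf[unfolded conf_has_deriv_within_def, folded c_def] rescale]
    by (intro tendsto_divide tendsto_const) (use c in auto)
  moreover have "(f (t + (y - t) / c * c) - f t) / ((y - t) / c) / c = (f y - f t) / (y - t)" for y
    using c by simp
  ultimately show ?thesis
    by (simp add: has_field_derivative_iff \<open>t powr (\<alpha> - 1) = 1 / c\<close>)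
qed

lemma has_real_derivative_sign_change_imp_min:
  fixes h h' :: "real \<Rightarrow> real"
  assumes cont: "continuous_on {u..v} h" and t: "t \<in> {u..v}" and y: "y \<in> {u..v}"
    and deriv: "\<And>x. x \<in> {u<..<v} \<Longrightarrow> (h has_real_derivative h' x) (at x)"
    and nonpos: "\<And>x. x \<in> {u<..<t} \<Longrightarrow> h' x \<le> 0"
    and nonneg: "\<And>x. x \<in> {t<..<v} \<Longrightarrow> 0 \<le> h' x"
  shows "h t \<le> h y"
proof (cases "t \<le> y")
  case True
  show ?thesis
  proof (rule DERIV_nonneg_imp_increasing_open[OF True])
    show "continuous_on {t..y} h" using t y by (intro continuous_on_subset[OF cont]) auto
  qed (use t y deriv nonneg in \<open>fastforce\<close>)
next
  case False
  show ?thesis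
  proof (rule DERIV_nonpos_imp_decreasing_open[of y t h])
    show "continuous_on {y..t} h" using t y by (intro continuous_on_subset[OF cont]) auto
    fix x assume "y < x" "x < t"
    then show "\<exists>z. (h has_real_derivative z) (at x) \<and> z \<le> 0"
      using t y deriv nonpos by (intro exI[of _ "h' x"]) auto
  qed (use False in auto)
qed

lemma le_chord_if_tangents_le:
  fixes y ya yb D pa ps pb :: real
  assumes "y + D * (pa - ps) \<le> ya" "y + D * (pb - ps) \<le> yb" "pa \<le> ps" "ps \<le> pb" "pa < pb"
  shows "y \<le> ya + (yb - ya) * (ps - pa) / (pb - pa)"
proof -
  have "(y + D * (pa - ps)) * (pb - ps) + (y + D * (pb - ps)) * (ps - pa)
      \<le> ya * (pb - ps) + yb * (ps - pa)"
    using assms by (intro add_mono mult_right_mono) auto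
  then have "y * (pb - pa) \<le> ya * (pb - ps) + yb * (ps - pa)"
    by (simp add: algebra_simps)
  then show ?thesis
    using assms by (simp add: field_simps)
qed

lemma has_integral_affine_powr_weight:
  fixes \<alpha> a b c d :: real
  assumes "0 < \<alpha>" "0 \<le> a" "a \<le> b"
  shows "((\<lambda>s. (c + d * s powr \<alpha>) * s powr (\<alpha> - 1)) has_integral
           (b powr \<alpha> - a powr \<alpha>) / \<alpha> * (c + d * (a powr \<alpha> + b powr \<alpha>) / 2)) {a..b}"
proof -
  define F where "F x = (c * x powr \<alpha> + d * (x powr \<alpha>)\<^sup>2 / 2) / \<alpha>" for x :: real
  have "((\<lambda>s. (c + d * s powr \<alpha>) * s powr (\<alpha> - 1)) has_integral F b - F a) {a..b}"
  proof (rule fundamental_theorem_of_calculus_interior[OF \<open>a \<le> b\<close>])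
    show "continuous_on {a..b} F"
      unfolding F_def using assms by (intro continuous_on_powr' continuous_intros) auto
    fix x assume "x \<in> {a<..<b}"
    then have "0 < x" using assms by auto
    have "(F has_real_derivative
        (c * (\<alpha> * x powr (\<alpha> - 1)) + d * (2 * x powr \<alpha> * (\<alpha> * x powr (\<alpha> - 1))) / 2) / \<alpha>) (at x)"
      unfolding F_def
      using \<open>0 < x\<close> assms by (intro derivative_eq_intros has_real_derivative_powr) auto
    moreover have "(c * (\<alpha> * x powr (\<alpha> - 1)) + d * (2 * x powr \<alpha> * (\<alpha> * x powr (\<alpha> - 1))) / 2) / \<alpha>
        = (c + d * x powr \<alpha>) * x powr (\<alpha> - 1)"
      using assms by (simp add: field_simps)
    ultimately show "(F has_vector_derivative (c + d * x powr \<alpha>) * x powr (\<alpha> - 1)) (at x)"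
      by (simp add: has_real_derivative_iff_has_vector_derivative)
  qed
  moreover have "F b - F a = (b powr \<alpha> - a powr \<alpha>) / \<alpha> * (c + d * (a powr \<alpha> + b powr \<alpha>) / 2)"
    unfolding F_def using assms by (simp add: field_simps power2_eq_square)
  ultimately show ?thesis by simp
qed

lemma mono_on_mult_integrable_on:
  fixes f g :: "real \<Rightarrow> real"
  assumes f: "mono_on {a..b} f" and g: "g integrable_on {a..b}" "\<And>x. x \<in> {a..b} \<Longrightarrow> 0 \<le> g x"
  shows "(\<lambda>x. f x * g x) integrable_on {a..b}"
proof -
  have "f \<in> borel_measurable (lebesgue_on {a..b})"
    using borel_measurable_integrable[OF integrable_mono_on[OF f]] .
  moreover have "bounded (f ` {a..b})"
    using f by (intro bounded_subset[OF bounded_closed_interval, of _ "f a" "f b"])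
      (auto simp: monotone_on_def)
  moreover have "g absolutely_integrable_on {a..b}"
    using g by (intro nonnegative_absolutely_integrable_1) auto
  ultimately have "(\<lambda>x. f x * g x) absolutely_integrable_on {a..b}"
    by (intro absolutely_integrable_bounded_measurable_product_real) auto
  then show ?thesis by (simp add: absolutely_integrable_on_def)
qed

lemma powr_midpoint_ge:
  fixes \<alpha> x y :: real
  assumes "0 < \<alpha>" "\<alpha> \<le> 1" "0 \<le> x" "0 \<le> y"
  shows "x powr \<alpha> + y powr \<alpha> \<le> 2 * ((x + y) / 2) powr \<alpha>"
proof (cases "x + y = 0")
  case True
  then have "x = 0" "y = 0" using assms by auto
  then show ?thesis by simp
next
  case False
  define m where "m = (x + y) / 2"
  have "0 < m" using False assms by (simp add: m_def)
  have young: "z powr \<alpha> * m powr (1 - \<alpha>) \<le> \<alpha> * z + (1 - \<alpha>) * m" if "0 \<le> z" for z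
  proof (cases "z = 0")
    case False
    then show ?thesis using Youngs_inequality_0[of \<alpha> "1 - \<alpha>" z m] assms \<open>0 < m\<close> that by simp
  qed (use assms \<open>0 < m\<close> in simp)
  have "(x powr \<alpha> + y powr \<alpha>) * m powr (1 - \<alpha>) \<le> (\<alpha> * x + (1 - \<alpha>) * m) + (\<alpha> * y + (1 - \<alpha>) * m)"
    unfolding distrib_right using young assms by (intro add_mono) auto
  also have "\<dots> = 2 * m"
    by (simp add: m_def algebra_simps)
  also have "\<dots> = 2 * m powr \<alpha> * m powr (1 - \<alpha>)"
    using \<open>0 < m\<close> by (simp flip: powr_add)
  finally show ?thesis
    using \<open>0 < m\<close> by (simp add: m_def)
qed

locale conf_convex_antimono =
  fixes \<alpha> a b :: real and f Df :: "real \<Rightarrow> real"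
  assumes alpha_pos: "0 < \<alpha>" and a_nonneg: "0 \<le> a" and a_less_b: "a < b"
    and conf_deriv: "conf_deriv_on \<alpha> f Df a b"
    and mono_Df: "mono_on {a..b} Df"
    and antimono_f: "antimono_on {a..b} f"
begin

lemma has_real_derivative_within:
  assumes "x \<in> {a..b}" "0 < x"
  shows "(f has_real_derivative Df x * x powr (\<alpha> - 1)) (at x within {a..b})"
  using assms conf_deriv conf_has_deriv_within_imp_has_real_derivative
  unfolding conf_deriv_on_def by blast

lemma tangent_le_pos:
  assumes t: "t \<in> {a<..<b}" and s: "s \<in> {a..b}" "0 < s"
  shows "f t + Df t * (s powr \<alpha> - t powr \<alpha>) / \<alpha> \<le> f s"
proof -
  define h where "h x = f x - Df t * x powr \<alpha> / \<alpha>" for x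
  define u v where "u = min s t" and "v = max s t"
  have uv: "0 < u" "a \<le> u" "v \<le> b" using s t a_nonneg by (auto simp: u_def v_def)
  have h_deriv: "(h has_real_derivative (Df x - Df t) * x powr (\<alpha> - 1)) (at x within {a..b})"
    if "x \<in> {u..v}" for x
  proof -
    have x: "x \<in> {a..b}" "0 < x" using that uv by auto
    have "(h has_real_derivative Df x * x powr (\<alpha> - 1) - Df t * (\<alpha> * x powr (\<alpha> - 1)) / \<alpha>)
        (at x within {a..b})"
      unfolding h_def
      by (intro DERIV_diff DERIV_cdivide DERIV_cmult has_real_derivative_within x
          has_field_derivative_at_within[OF has_real_derivative_powr])
    then show ?thesis using alpha_pos by (simp add: field_simps)
  qed
  have "h t \<le> h s"
  proof (rule has_real_derivative_sign_change_imp_min[of u v h t s])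
    show "continuous_on {u..v} h"
      unfolding continuous_on_eq_continuous_within
    proof
      fix x assume "x \<in> {u..v}"
      then show "continuous (at x within {u..v}) h"
        using uv by (intro continuous_within_subset[OF DERIV_continuous[OF h_deriv]]) auto
    qed
  next
    fix x assume "x \<in> {u<..<v}"
    then show "(h has_real_derivative (Df x - Df t) * x powr (\<alpha> - 1)) (at x)"
      using h_deriv[of x] uv at_within_Icc_at[of a x b] by auto
  next
    fix x assume "x \<in> {u<..<t}"
    then show "(Df x - Df t) * x powr (\<alpha> - 1) \<le> 0"
      using t uv mono_onD[OF mono_Df, of x t] by (auto intro: mult_nonpos_nonneg)
  next
    fix x assume "x \<in> {t<..<v}"
    then show "0 \<le> (Df x - Df t) * x powr (\<alpha> - 1)"
      using t uv mono_onD[OF mono_Df, of t x] by auto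
  qed (auto simp: u_def v_def)
  then show ?thesis by (simp add: h_def diff_divide_distrib right_diff_distrib)
qed

lemma tangent_le:
  assumes t: "t \<in> {a<..<b}" and s: "s \<in> {a..b}"
  shows "f t + Df t * (s powr \<alpha> - t powr \<alpha>) / \<alpha> \<le> f s"
proof (cases "0 < s")
  case True
  then show ?thesis using tangent_le_pos t s by blast
next
  case False
  \<comment> \<open>f need not be continuous at 0; the bound at 0 is a limit of the bounds at x > 0, which
    are bounds for f 0 since f is decreasing.\<close>
  then have "s = 0" "a = 0" using s a_nonneg by auto
  have "0 < t" using t a_nonneg by auto
  have lim: "((\<lambda>x. f t + Df t * (x powr \<alpha> - t powr \<alpha>) / \<alpha>)
      \<longlongrightarrow> f t + Df t * (0 powr \<alpha> - t powr \<alpha>) / \<alpha>) (at_right 0)"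
    using alpha_pos by (intro tendsto_intros) (auto simp: eventually_at_filter)
  have "\<forall>\<^sub>F x in at_right 0. f t + Df t * (x powr \<alpha> - t powr \<alpha>) / \<alpha> \<le> f s"
  proof (rule eventually_at_rightI[OF _ \<open>0 < t\<close>])
    fix x assume x: "x \<in> {0<..<t}"
    then have "f t + Df t * (x powr \<alpha> - t powr \<alpha>) / \<alpha> \<le> f x"
      using tangent_le_pos t \<open>a = 0\<close> by auto
    also have "f x \<le> f s"
      using x t \<open>s = 0\<close> \<open>a = 0\<close> by (intro monotone_onD[OF antimono_f]) auto
    finally show "f t + Df t * (x powr \<alpha> - t powr \<alpha>) / \<alpha> \<le> f s" .
  qed
  from tendsto_le[OF _ tendsto_const lim this] show ?thesis
    using \<open>s = 0\<close> by simp
qed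

lemma powr_a_less_powr_b: "a powr \<alpha> < b powr \<alpha>"
  using alpha_pos a_nonneg a_less_b by (intro powr_less_mono2) auto

lemma le_chord:
  assumes s: "s \<in> {a..b}"
  shows "f s \<le> f a + (f b - f a) * (s powr \<alpha> - a powr \<alpha>) / (b powr \<alpha> - a powr \<alpha>)"
proof (cases "s = a \<or> s = b")
  case True
  then show ?thesis using powr_a_less_powr_b by auto
next
  case False
  then have s': "s \<in> {a<..<b}" using s by auto
  show ?thesis
  proof (rule le_chord_if_tangents_le[where D = "Df s / \<alpha>"])
    show "f s + Df s / \<alpha> * (a powr \<alpha> - s powr \<alpha>) \<le> f a"
      using tangent_le[OF s', of a] a_less_b by simp
    show "f s + Df s / \<alpha> * (b powr \<alpha> - s powr \<alpha>) \<le> f b"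
      using tangent_le[OF s', of b] a_less_b by simp
  qed (use s' alpha_pos a_nonneg in \<open>auto intro: powr_mono2 powr_less_mono2\<close>)
qed

lemma weighted_integrable: "(\<lambda>s. f s * s powr (\<alpha> - 1)) integrable_on {a..b}"
proof -
  have "mono_on {a..b} (\<lambda>x. - f x)"
    using antimono_f by (auto simp: monotone_on_def)
  then have "(\<lambda>s. - f s * s powr (\<alpha> - 1)) integrable_on {a..b}"
    using has_integral_affine_powr_weight[OF alpha_pos a_nonneg, of b 1 0] a_less_b
    by (intro mono_on_mult_integrable_on) (auto dest: has_integral_integrable)
  then show ?thesis
    using integrable_neg by fastforce
qed

lemma conf_integral_ge_affine:
  assumes "\<And>s. s \<in> {a..b} \<Longrightarrow> c + d * s powr \<alpha> \<le> f s"
  shows "(b powr \<alpha> - a powr \<alpha>) / \<alpha> * (c + d * (a powr \<alpha> + b powr \<alpha>) / 2) \<le> conf_integral \<alpha> a b f"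
  unfolding conf_integral_def
  using a_less_b assms
  by (intro has_integral_le[OF has_integral_affine_powr_weight[OF alpha_pos a_nonneg]
        integrable_integral[OF weighted_integrable]] mult_right_mono) auto

lemma conf_integral_le_affine:
  assumes "\<And>s. s \<in> {a..b} \<Longrightarrow> f s \<le> c + d * s powr \<alpha>"
  shows "conf_integral \<alpha> a b f \<le> (b powr \<alpha> - a powr \<alpha>) / \<alpha> * (c + d * (a powr \<alpha> + b powr \<alpha>) / 2)"
  unfolding conf_integral_def
  using a_less_b assms
  by (intro has_integral_le[OF integrable_integral[OF weighted_integrable]
        has_integral_affine_powr_weight[OF alpha_pos a_nonneg]] mult_right_mono) auto

definition alpha_centroid :: real where
  "alpha_centroid = ((a powr \<alpha> + b powr \<alpha>) / 2) powr (1 / \<alpha>)"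

lemma alpha_centroid_powr: "alpha_centroid powr \<alpha> = (a powr \<alpha> + b powr \<alpha>) / 2"
  unfolding alpha_centroid_def using alpha_pos by (simp add: powr_powr)

lemma alpha_centroid_between: "alpha_centroid \<in> {a<..<b}"
proof -
  have "a powr \<alpha> < alpha_centroid powr \<alpha>" "alpha_centroid powr \<alpha> < b powr \<alpha>"
    using powr_a_less_powr_b by (auto simp: alpha_centroid_powr)
  moreover have "0 \<le> alpha_centroid" by (simp add: alpha_centroid_def)
  ultimately show ?thesis
    using alpha_pos a_nonneg a_less_b by (auto simp: not_le[symmetric] intro: powr_mono2)
qed

lemma alpha_centroid_le_midpoint:
  assumes "\<alpha> \<le> 1"
  shows "alpha_centroid \<le> (a + b) / 2"
proof -
  have centroid_le: "alpha_centroid powr \<alpha> \<le> ((a + b) / 2) powr \<alpha>"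
    using powr_midpoint_ge[OF alpha_pos assms a_nonneg, of b] a_less_b a_nonneg
    by (simp add: alpha_centroid_powr)
  show ?thesis
  proof (rule ccontr)
    assume "\<not> ?thesis"
    then have "((a + b) / 2) powr \<alpha> < alpha_centroid powr \<alpha>"
      using alpha_pos a_nonneg a_less_b by (intro powr_less_mono2) auto
    with centroid_le show False by simp
  qed
qed

lemma hermite_hadamard_lower:
  "f alpha_centroid \<le> \<alpha> / (b powr \<alpha> - a powr \<alpha>) * conf_integral \<alpha> a b f"
proof -
  let ?c = alpha_centroid
  have "(b powr \<alpha> - a powr \<alpha>) / \<alpha>
        * ((f ?c - Df ?c * ?c powr \<alpha> / \<alpha>) + Df ?c / \<alpha> * (a powr \<alpha> + b powr \<alpha>) / 2)
      \<le> conf_integral \<alpha> a b f"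
  proof (rule conf_integral_ge_affine)
    fix s assume "s \<in> {a..b}"
    then show "(f ?c - Df ?c * ?c powr \<alpha> / \<alpha>) + Df ?c / \<alpha> * s powr \<alpha> \<le> f s"
      using tangent_le[OF alpha_centroid_between, of s] by (simp add: diff_divide_distrib right_diff_distrib)
  qed
  then show ?thesis
    using alpha_pos powr_a_less_powr_b by (simp add: alpha_centroid_powr field_simps)
qed

lemma hermite_hadamard_upper:
  "\<alpha> / (b powr \<alpha> - a powr \<alpha>) * conf_integral \<alpha> a b f \<le> (f a + f b) / 2"
proof -
  define d where "d = (f b - f a) / (b powr \<alpha> - a powr \<alpha>)"
  have "conf_integral \<alpha> a b f
      \<le> (b powr \<alpha> - a powr \<alpha>) / \<alpha> * ((f a - d * a powr \<alpha>) + d * (a powr \<alpha> + b powr \<alpha>) / 2)"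
  proof (rule conf_integral_le_affine)
    fix s assume "s \<in> {a..b}"
    then have "f s \<le> f a + d * (s powr \<alpha> - a powr \<alpha>)"
      unfolding d_def times_divide_eq_left by (rule le_chord)
    then show "f s \<le> (f a - d * a powr \<alpha>) + d * s powr \<alpha>"
      by (simp add: right_diff_distrib)
  qed
  also have "(f a - d * a powr \<alpha>) + d * (a powr \<alpha> + b powr \<alpha>) / 2
      = f a + d * (b powr \<alpha> - a powr \<alpha>) / 2"
    by (simp add: field_simps)
  also have "\<dots> = (f a + f b) / 2"
  proof -
    have "d * (b powr \<alpha> - a powr \<alpha>) = f b - f a"
      using powr_a_less_powr_b by (simp add: d_def)
    then show ?thesis by (simp add: field_simps)
  qed
  finally show ?thesis
    using alpha_pos powr_a_less_powr_b by (simp add: field_simps)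
qed

lemma midpoint_le_mean_endpoints:
  assumes "\<alpha> \<le> 1"
  shows "f ((a + b) / 2) \<le> (f a + f b) / 2"
proof -
  define \<theta> where "\<theta> = (((a + b) / 2) powr \<alpha> - a powr \<alpha>) / (b powr \<alpha> - a powr \<alpha>)"
  have "f ((a + b) / 2) \<le> f a + (f b - f a) * \<theta>"
    using le_chord[of "(a + b) / 2"] a_less_b by (simp add: \<theta>_def)
  moreover have "1 / 2 \<le> \<theta>"
    using powr_midpoint_ge[OF alpha_pos assms a_nonneg, of b] a_nonneg a_less_b powr_a_less_powr_b
    by (simp add: \<theta>_def field_simps)
  moreover have "f b \<le> f a"
    using a_less_b by (intro monotone_onD[OF antimono_f]) auto
  ultimately have "(f b - f a) * \<theta> \<le> (f b - f a) * (1 / 2)"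
    by (intro mult_left_mono_neg) auto
  then show ?thesis
    using \<open>f ((a + b) / 2) \<le> f a + (f b - f a) * \<theta>\<close> by argo
qed

end

theorem mainTheorem9:
  fixes \<alpha> a b :: real and f Df :: "real \<Rightarrow> real"
  assumes "0 < \<alpha>" and "\<alpha> \<le> 1"
    and "0 \<le> a" and "a < b"
    and "conf_deriv_on \<alpha> f Df a b"
    and "mono_on {a..b} Df"
    and "antimono_on {a..b} f"
  shows "f ((a + b) / 2) \<le> \<alpha> / (b powr \<alpha> - a powr \<alpha>) * conf_integral \<alpha> a b f \<and>
         \<alpha> / (b powr \<alpha> - a powr \<alpha>) * conf_integral \<alpha> a b f \<le> f b + f a - f ((a + b) / 2)"
proof -
  interpret conf_convex_antimono \<alpha> a b f Df
    using assms by unfold_locales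
  have "f ((a + b) / 2) \<le> f alpha_centroid"
    using alpha_centroid_between alpha_centroid_le_midpoint[OF \<open>\<alpha> \<le> 1\<close>] \<open>a < b\<close>
    by (intro monotone_onD[OF antimono_f]) auto
  then show ?thesis
    using hermite_hadamard_lower hermite_hadamard_upper midpoint_le_mean_endpoints[OF \<open>\<alpha> \<le> 1\<close>]
    by argo
qed

end
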